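(* Let $G=(V,E)$ be a connected graph on $V=\{1,\dots,n\}$ with incidence matrix $B$ and Laplacian $L=BB^T$. For every $\Delta\in\mathbb{R}^{|E|}$ and all $i,j\in V$, $$\left|\Delta^TB^TL^\dagger(e_i-e_j)\right|\le\|\Delta\|_\infty\sqrt{\Omega_{ij}\,|E_{ij}|}.$$
   Context: Each edge of $G$ is given an arbitrary orientation; $B\in\mathbb{R}^{n\times|E|}$ has, in the column of edge $(a,b)$, $+1$ in row $a$, $-1$ in row $b$ and zeros elsewhere. $L^\dagger$ is the Moore–Penrose pseudoinverse of $L$. $\Omega_{ij}=(e_i-e_j)^TL^\dagger(e_i-e_j)$ is the effective resistance between $i$ and $j$ when every edge is a unit resistor. $E_{ij}$ is the set of edges lying on at least one simple path from $i$ to $j$. *)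

theory Defs
  imports "HOL-Analysis.Analysis"
begin

definition pinv :: "real^'n^'m \<Rightarrow> real^'m^'n" where
  "pinv A = (THE X. A ** X ** A = A \<and> X ** A ** X = X \<and>
                    transpose (A ** X) = A ** X \<and> transpose (X ** A) = X ** A)"

text \<open>A simple graph on the finite vertex type 'v, given by a set E of oriented
  edges (a,b): no loops, and each undirected edge is present with exactly one orientation.\<close>
definition simple_oriented_graph :: "('v \<times> 'v) set \<Rightarrow> bool" where
  "simple_oriented_graph E \<longleftrightarrow> (\<forall>(a,b)\<in>E. a \<noteq> b \<and> (b,a) \<notin> E)"

definition adj :: "('v \<times> 'v) set \<Rightarrow> 'v \<Rightarrow> 'v \<Rightarrow> bool" where
  "adj E u v \<longleftrightarrow> (u,v) \<in> E \<or> (v,u) \<in> E"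

definition connected_graph :: "('v \<times> 'v) set \<Rightarrow> bool" where
  "connected_graph E \<longleftrightarrow> (\<forall>u v. (u,v) \<in> {(x,y). adj E x y}\<^sup>*)"

definition incidence :: "('v \<times> 'v) set \<Rightarrow> 'v \<Rightarrow> ('v \<times> 'v) \<Rightarrow> real" where
  "incidence E v e = (if e \<in> E then (if v = fst e then 1 else if v = snd e then -1 else 0) else 0)"

definition laplacian :: "('v::finite \<times> 'v) set \<Rightarrow> real^'v^'v" where
  "laplacian E = (\<chi> u v. \<Sum>e\<in>E. incidence E u e * incidence E v e)"

definition simple_path :: "('v \<times> 'v) set \<Rightarrow> 'v \<Rightarrow> 'v \<Rightarrow> 'v list \<Rightarrow> bool" where
  "simple_path E i j p \<longleftrightarrow> p \<noteq> [] \<and> hd p = i \<and> last p = j \<and> distinct p \<and>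
     (\<forall>k. Suc k < length p \<longrightarrow> adj E (p ! k) (p ! Suc k))"

definition edge_on_path :: "('v \<times> 'v) \<Rightarrow> 'v list \<Rightarrow> bool" where
  "edge_on_path e p \<longleftrightarrow> (\<exists>k. Suc k < length p \<and>
     ((p ! k, p ! Suc k) = e \<or> (p ! Suc k, p ! k) = e))"

definition path_edges :: "('v \<times> 'v) set \<Rightarrow> 'v \<Rightarrow> 'v \<Rightarrow> ('v \<times> 'v) set" where
  "path_edges E i j = {e\<in>E. \<exists>p. simple_path E i j p \<and> edge_on_path e p}"

definition eff_res :: "('v::finite \<times> 'v) set \<Rightarrow> 'v \<Rightarrow> 'v \<Rightarrow> real" where
  "eff_res E i j = (axis i 1 - axis j 1) \<bullet> (pinv (laplacian E) *v (axis i 1 - axis j 1))"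

definition linf :: "('v \<times> 'v) set \<Rightarrow> (('v \<times> 'v) \<Rightarrow> real) \<Rightarrow> real" where
  "linf E \<Delta> = (if E = {} then 0 else Max ((\<lambda>e. \<bar>\<Delta> e\<bar>) ` E))"

end

theory Submission
  imports Defs
begin

text \<open>Put x = L^+ (e_i - e_j). The kernel of the Laplacian of a connected graph consists of
  the constant vectors, which are orthogonal to e_i - e_j, so L x = e_i - e_j: x is the
  potential of a unit current f = B^T x from i to j. The left-hand side is then \<Delta>^T f and
  \<Omega>_ij = x^T L x = |f|^2, so by Cauchy-Schwarz it suffices that every edge carrying current
  lies on a simple path from i to j. Since the net outflow vanishes away from i and j, a vertex
  other than j with a higher neighbour (or i itself) has a lower one; descending from the lower
  end of a current-carrying edge reaches j, ascending from its upper end reaches i, and as the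
  potential is strictly monotone along the concatenated walk, that walk is a simple path.\<close>

section \<open>Pseudoinverse of a symmetric matrix\<close>

definition moore_penrose :: "real^'n^'m \<Rightarrow> real^'m^'n \<Rightarrow> bool" where
  "moore_penrose A X \<longleftrightarrow> A ** X ** A = A \<and> X ** A ** X = X \<and>
     transpose (A ** X) = A ** X \<and> transpose (X ** A) = X ** A"

lemma pinv_eq_The_moore_penrose: "pinv A = (THE X. moore_penrose A X)"
  by (simp add: pinv_def moore_penrose_def)

lemma moore_penrose_unique:
  assumes "moore_penrose A X" and "moore_penrose A Y"
  shows "X = Y"
proof -
  have AXA: "A ** X ** A = A" and XAX: "X ** A ** X = X"
    and AX: "transpose (A ** X) = A ** X" and XA: "transpose (X ** A) = X ** A"
    using assms(1) by (simp_all add: moore_penrose_def)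
  have AYA: "A ** Y ** A = A" and YAY: "Y ** A ** Y = Y"
    and AY: "transpose (A ** Y) = A ** Y" and YA: "transpose (Y ** A) = Y ** A"
    using assms(2) by (simp_all add: moore_penrose_def)
  have "X ** A = transpose ((X ** A) ** (Y ** A))"
    using XA AYA by (metis matrix_mul_assoc)
  also have "\<dots> = (Y ** A) ** (X ** A)"
    using XA YA by (simp add: matrix_transpose_mul)
  also have "\<dots> = Y ** A"
    using AXA by (metis matrix_mul_assoc)
  finally have XA_eq: "X ** A = Y ** A" .
  have "A ** X = transpose ((A ** Y) ** (A ** X))"
    using AX AYA by (metis matrix_mul_assoc)
  also have "\<dots> = (A ** X) ** (A ** Y)"
    using AX AY by (simp add: matrix_transpose_mul)
  also have "\<dots> = A ** Y"
    using AXA by (metis matrix_mul_assoc)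
  finally have AX_eq: "A ** X = A ** Y" .
  have "X = Y ** A ** X"
    using XAX XA_eq by simp
  also have "\<dots> = Y"
    using YAY AX_eq by (metis matrix_mul_assoc)
  finally show ?thesis .
qed

lemma moore_penrose_pinv:
  assumes "moore_penrose A X"
  shows "moore_penrose A (pinv A)"
proof -
  have "\<exists>!X. moore_penrose A X"
    using assms moore_penrose_unique by blast
  then show ?thesis
    unfolding pinv_eq_The_moore_penrose by (rule theI')
qed

lemma transpose_diff: "transpose (A - B) = transpose A - transpose (B :: 'a::ab_group_add^'n^'m)"
  by (simp add: transpose_def vec_eq_iff)

lemma transpose_zero [simp]: "transpose (0 :: 'a::zero^'n^'m) = 0"
  by (simp add: transpose_def vec_eq_iff)

lemma matrix_add_rdistrib: "(A + B) ** C = A ** C + B ** (C :: 'a::semiring_1^'p^'n)"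
  by (simp add: matrix_matrix_mult_def vec_eq_iff sum.distrib distrib_right)

lemma matrix_diff_ldistrib: "A ** (B - C) = A ** B - A ** (C :: 'a::ring_1^'p^'n)"
  by (simp add: matrix_matrix_mult_def vec_eq_iff sum_subtractf right_diff_distrib)

lemma matrix_diff_rdistrib: "(A - B) ** C = A ** C - B ** (C :: 'a::ring_1^'p^'n)"
  by (simp add: matrix_matrix_mult_def vec_eq_iff sum_subtractf left_diff_distrib)

lemma orthogonal_projection_matrix_exists:
  fixes S :: "(real^'n) set"
  assumes "subspace S"
  obtains Q :: "real^'n^'n" where "transpose Q = Q" "\<And>y. Q *v y \<in> S" "\<And>y. y \<in> S \<Longrightarrow> Q *v y = y"
proof -
  obtain B where orth: "pairwise orthogonal B" and unit: "\<And>b. b \<in> B \<Longrightarrow> norm b = 1"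
    and indep: "independent B" and span: "span B = S"
    using orthonormal_basis_subspace[OF assms] by metis
  have "finite B"
    using indep independent_imp_finite by blast
  define Q :: "real^'n^'n" where "Q = (\<chi> r c. \<Sum>b\<in>B. b$r * b$c)"
  have Q_mult: "Q *v y = (\<Sum>b\<in>B. (b \<bullet> y) *\<^sub>R b)" for y
    unfolding Q_def
    by (simp add: vec_eq_iff matrix_vector_mult_def inner_vec_def sum_distrib_left
        sum_distrib_right sum_component ac_simps) (subst sum.swap, simp add: sum_distrib_left ac_simps)
  have Q_in_span: "Q *v y \<in> span B" for y
    unfolding Q_mult by (intro span_sum span_mul span_base)
  have inner_Q: "b \<bullet> (Q *v y) = b \<bullet> y" if "b \<in> B" for b y
  proof -
    have "b \<bullet> (Q *v y) = (\<Sum>c\<in>B. if c = b then b \<bullet> y else 0)"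
      unfolding Q_mult inner_sum_right
      using orth unit that by (intro sum.cong) (auto simp: pairwise_def orthogonal_def norm_eq_1)
    also have "\<dots> = b \<bullet> y"
      using \<open>finite B\<close> that by simp
    finally show ?thesis .
  qed
  show thesis
  proof
    show "transpose Q = Q"
      by (simp add: Q_def transpose_def vec_eq_iff mult.commute)
    show "Q *v y \<in> S" for y
      using Q_in_span span by blast
    show "Q *v y = y" if "y \<in> S" for y
    proof -
      have "y - Q *v y \<in> span B"
        using that span Q_in_span by (metis span_diff span_span)
      moreover have "orthogonal (y - Q *v y) b" if "b \<in> B" for b
        using inner_Q[OF that] by (simp add: orthogonal_def inner_commute[of _ b] inner_diff_right)
      ultimately have "orthogonal (y - Q *v y) (y - Q *v y)"
        using orthogonal_to_span by blast
      then show ?thesis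
        by (simp add: orthogonal_def)
    qed
  qed
qed

text \<open>The pseudoinverse of a symmetric A is (A + Q)^-1 - Q, where Q is the orthogonal
  projection onto the kernel of A.\<close>
lemma symmetric_moore_penrose_exists:
  fixes A :: "real^'n^'n"
  assumes sym: "transpose A = A"
  obtains X where "moore_penrose A X"
proof -
  have "subspace {y. A *v y = 0}"
    by (auto simp: subspace_def matrix_vector_right_distrib matrix_vector_mult_scaleR)
  then obtain Q :: "real^'n^'n" where Q_sym: "transpose Q = Q"
    and Q_range: "\<And>y. A *v (Q *v y) = 0" and Q_fix: "\<And>y. A *v y = 0 \<Longrightarrow> Q *v y = y"
    by (rule orthogonal_projection_matrix_exists) blast
  have AQ: "A ** Q = 0"
    by (simp add: matrix_eq flip: matrix_vector_mul_assoc add: Q_range)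
  have QA: "Q ** A = 0"
    by (metis AQ Q_sym sym matrix_transpose_mul transpose_transpose transpose_zero)
  have QQ: "Q ** Q = Q"
    by (simp add: matrix_eq flip: matrix_vector_mul_assoc add: Q_fix Q_range)
  have "x = 0" if "(A + Q) *v x = 0" for x
  proof -
    have "Q *v x = (Q ** (A + Q)) *v x"
      by (simp add: matrix_add_ldistrib QA QQ)
    then have Qx: "Q *v x = 0"
      using that by (simp flip: matrix_vector_mul_assoc)
    then have "A *v x = 0"
      using that by (simp add: matrix_vector_mult_add_rdistrib)
    then show "x = 0"
      using Q_fix Qx by metis
  qed
  then obtain N where N_left: "N ** (A + Q) = mat 1"
    using matrix_left_invertible_ker by blast
  then have N_right: "(A + Q) ** N = mat 1"
    using matrix_left_right_inverse by blast
  have NQ: "N ** Q = Q"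
    by (metis N_left AQ QQ add_0 matrix_add_rdistrib matrix_mul_assoc matrix_mul_lid)
  have QN: "Q ** N = Q"
    by (metis N_right QA QQ add_0 matrix_add_ldistrib matrix_mul_assoc matrix_mul_rid)
  define X where "X = N - Q"
  have AX: "A ** X = mat 1 - Q"
    by (metis N_right QN AQ X_def matrix_add_rdistrib matrix_diff_ldistrib add_diff_cancel_right' diff_zero)
  have XA: "X ** A = mat 1 - Q"
    by (metis N_left NQ QA X_def matrix_add_ldistrib matrix_diff_rdistrib add_diff_cancel_right' diff_zero)
  have QX: "Q ** X = 0"
    by (simp add: X_def matrix_diff_ldistrib QN QQ)
  have "moore_penrose A X"
    unfolding moore_penrose_def
  proof (intro conjI)
    show "A ** X ** A = A"
      by (simp add: AX matrix_diff_rdistrib QA)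
    show "X ** A ** X = X"
      by (simp add: XA matrix_diff_rdistrib QX)
    show "transpose (A ** X) = A ** X" "transpose (X ** A) = X ** A"
      by (simp_all add: AX XA transpose_diff Q_sym)
  qed
  then show thesis ..
qed

lemma symmetric_inner_commute:
  fixes A :: "real^'n^'n"
  assumes "transpose A = A"
  shows "(A *v x) \<bullet> y = x \<bullet> (A *v y)"
  by (metis assms dot_lmul_matrix transpose_matrix_vector)

lemma symmetric_pinv_solves:
  fixes A :: "real^'n^'n"
  assumes sym: "transpose A = A" and kernel_orth: "\<And>z. A *v z = 0 \<Longrightarrow> z \<bullet> d = 0"
  shows "A *v (pinv A *v d) = d"
proof -
  obtain X where "moore_penrose A X"
    using sym by (rule symmetric_moore_penrose_exists)
  then have AMA: "A ** pinv A ** A = A" and AM_sym: "transpose (A ** pinv A) = A ** pinv A"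
    using moore_penrose_pinv[of A X] by (simp_all add: moore_penrose_def)
  define z where "z = d - A *v (pinv A *v d)"
  have z_orth_range: "z \<bullet> (A *v u) = 0" for u
  proof -
    have "(A *v (pinv A *v d)) \<bullet> (A *v u) = d \<bullet> ((A ** pinv A ** A) *v u)"
      by (metis AM_sym symmetric_inner_commute matrix_vector_mul_assoc)
    then show ?thesis
      by (simp add: z_def AMA inner_diff_left)
  qed
  then have "(A *v z) \<bullet> (A *v z) = 0"
    by (simp add: symmetric_inner_commute[OF sym])
  then have "z \<bullet> d = 0"
    by (simp add: kernel_orth)
  then have "z \<bullet> z = 0"
    using z_orth_range by (simp add: z_def inner_diff_right)
  then show ?thesis
    by (simp add: z_def)
qed

section \<open>Potentials and currents\<close>

text \<open>In the paper's notation, edge_flow E y = B^T y and net_outflow E y = B B^T y = L y.\<close>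

definition edge_flow :: "('v::finite \<times> 'v) set \<Rightarrow> ('v \<Rightarrow> real) \<Rightarrow> 'v \<times> 'v \<Rightarrow> real" where
  "edge_flow E y e = (\<Sum>v\<in>UNIV. incidence E v e * y v)"

definition net_outflow :: "('v::finite \<times> 'v) set \<Rightarrow> ('v \<Rightarrow> real) \<Rightarrow> 'v \<Rightarrow> real" where
  "net_outflow E y u = (\<Sum>e\<in>E. incidence E u e * edge_flow E y e)"

definition unit_potential :: "('v::finite \<times> 'v) set \<Rightarrow> 'v \<Rightarrow> 'v \<Rightarrow> ('v \<Rightarrow> real) \<Rightarrow> bool" where
  "unit_potential E s t y \<longleftrightarrow> (\<forall>u. net_outflow E y u = of_bool (u = s) - of_bool (u = t))"

lemma edge_flow_edge:
  assumes "simple_oriented_graph E" and "(a, b) \<in> E"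
  shows "edge_flow E y (a, b) = y a - y b"
proof -
  have "a \<noteq> b"
    using assms by (auto simp: simple_oriented_graph_def)
  then have "edge_flow E y (a, b) = (\<Sum>v\<in>UNIV. of_bool (v = a) * y a - of_bool (v = b) * y b)"
    unfolding edge_flow_def using assms(2) by (intro sum.cong) (auto simp: incidence_def)
  then show ?thesis
    by (simp add: sum_subtractf)
qed

lemma net_outflow_uminus: "net_outflow E (\<lambda>v. - y v) u = - net_outflow E y u"
  by (simp add: net_outflow_def edge_flow_def sum_negf)

lemma unit_potential_uminus: "unit_potential E s t y \<Longrightarrow> unit_potential E t s (\<lambda>v. - y v)"
  by (simp add: unit_potential_def net_outflow_uminus)

lemma laplacian_mult_vec_nth: "(laplacian E *v x) $ u = net_outflow E (($) x) u"
  unfolding laplacian_def net_outflow_def edge_flow_def matrix_vector_mult_def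
  by (simp add: sum_distrib_left sum_distrib_right mult.assoc) (rule sum.swap)

lemma laplacian_symmetric: "transpose (laplacian E) = laplacian E"
  by (simp add: laplacian_def transpose_def vec_eq_iff mult.commute)

lemma laplacian_quadratic_form: "x \<bullet> (laplacian E *v x) = (\<Sum>e\<in>E. (edge_flow E (($) x) e)\<^sup>2)"
proof -
  have "x \<bullet> (laplacian E *v x) = (\<Sum>u\<in>UNIV. x $ u * (\<Sum>e\<in>E. incidence E u e * edge_flow E (($) x) e))"
    by (simp add: inner_vec_def laplacian_mult_vec_nth net_outflow_def)
  also have "\<dots> = (\<Sum>e\<in>E. edge_flow E (($) x) e * (\<Sum>u\<in>UNIV. incidence E u e * x $ u))"
    by (simp add: sum_distrib_left sum_distrib_right ac_simps) (rule sum.swap)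
  also have "\<dots> = (\<Sum>e\<in>E. (edge_flow E (($) x) e)\<^sup>2)"
    by (simp add: edge_flow_def power2_eq_square)
  finally show ?thesis .
qed

lemma connected_zero_flow_imp_constant:
  fixes E :: "('v::finite \<times> 'v) set"
  assumes sg: "simple_oriented_graph E" and "connected_graph E"
    and zero_flow: "\<And>e. e \<in> E \<Longrightarrow> edge_flow E y e = 0"
  shows "y u = y v"
proof -
  have "(u, v) \<in> {(a, b). adj E a b}\<^sup>*"
    using assms(2) by (simp add: connected_graph_def)
  then show ?thesis
  proof (induction rule: rtrancl_induct)
    case (step b c)
    then have "(b, c) \<in> E \<or> (c, b) \<in> E"
      by (simp add: adj_def)
    then have "y b = y c"
      using zero_flow edge_flow_edge[OF sg] by force
    then show ?case
      using step.IH by simp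
  qed simp
qed

lemma laplacian_kernel_constant:
  fixes E :: "('v::finite \<times> 'v) set"
  assumes "simple_oriented_graph E" and "connected_graph E" and "laplacian E *v z = 0"
  shows "z $ u = z $ v"
proof -
  have "(\<Sum>e\<in>E. (edge_flow E (($) z) e)\<^sup>2) = 0"
    using assms(3) by (simp flip: laplacian_quadratic_form)
  then have "edge_flow E (($) z) e = 0" if "e \<in> E" for e
    using that by (simp add: sum_nonneg_eq_0_iff)
  then show ?thesis
    using connected_zero_flow_imp_constant[OF assms(1,2)] by blast
qed

lemma net_outflow_eq_sum_neighbours:
  fixes E :: "('v::finite \<times> 'v) set"
  assumes sg: "simple_oriented_graph E"
  shows "net_outflow E y u = (\<Sum>w | adj E u w. y u - y w)"
proof -
  define Eu where "Eu = {e \<in> E. fst e = u \<or> snd e = u}"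
  define other :: "'v \<times> 'v \<Rightarrow> 'v" where "other e = (if fst e = u then snd e else fst e)" for e
  have incident_term: "incidence E u e * edge_flow E y e = y u - y (other e)" if "e \<in> Eu" for e
    using that sg edge_flow_edge[OF sg, of "fst e" "snd e" y]
    by (auto simp: Eu_def other_def incidence_def simple_oriented_graph_def)
  have "inj_on other Eu"
    using sg by (fastforce simp: inj_on_def Eu_def other_def simple_oriented_graph_def)
  moreover have "other ` Eu = {w. adj E u w}"
  proof (intro equalityI subsetI)
    fix w assume "w \<in> {w. adj E u w}"
    then have "(u, w) \<in> Eu \<and> other (u, w) = w \<or> (w, u) \<in> Eu \<and> other (w, u) = w"
      using sg by (auto simp: adj_def Eu_def other_def simple_oriented_graph_def)
    then show "w \<in> other ` Eu"
      by (metis image_eqI)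
  qed (auto simp: Eu_def other_def adj_def)
  ultimately have "bij_betw other Eu {w. adj E u w}"
    by (simp add: bij_betw_def)
  then have "(\<Sum>w | adj E u w. y u - y w) = (\<Sum>e\<in>Eu. y u - y (other e))"
    by (rule sum.reindex_bij_betw[symmetric])
  also have "\<dots> = (\<Sum>e\<in>Eu. incidence E u e * edge_flow E y e)"
    by (simp add: incident_term)
  also have "\<dots> = (\<Sum>e\<in>E. incidence E u e * edge_flow E y e)"
    by (rule sum.mono_neutral_left) (auto simp: Eu_def incidence_def)
  finally show ?thesis
    by (simp add: net_outflow_def)
qed

lemma lower_neighbour_exists:
  fixes E :: "('v::finite \<times> 'v) set"
  assumes sg: "simple_oriented_graph E" and nonneg: "0 \<le> net_outflow E y u"
    and strict: "0 < net_outflow E y u \<or> (\<exists>w. adj E u w \<and> y u < y w)"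
  shows "\<exists>w. adj E u w \<and> y w < y u"
proof (rule ccontr)
  assume "\<nexists>w. adj E u w \<and> y w < y u"
  then have no_lower: "y u - y w \<le> 0" if "adj E u w" for w
    using that by force
  have outflow: "net_outflow E y u = (\<Sum>w | adj E u w. y u - y w)"
    by (rule net_outflow_eq_sum_neighbours[OF sg])
  show False
  proof (cases "0 < net_outflow E y u")
    case True
    moreover have "(\<Sum>w | adj E u w. y u - y w) \<le> 0"
      using no_lower by (intro sum_nonpos) simp
    ultimately show False
      unfolding outflow by linarith
  next
    case False
    then obtain w where "adj E u w" "y u - y w < 0"
      using strict by auto
    then have "(\<Sum>w | adj E u w. y u - y w) < (\<Sum>w | adj E u w. 0)"
      using no_lower by (intro sum_strict_mono_ex1) auto
    then show False
      using nonneg outflow by simp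
  qed
qed

lemma descending_walk_to_sink:
  fixes E :: "('v::finite \<times> 'v) set"
  assumes sg: "simple_oriented_graph E" and pot: "unit_potential E s t y"
  shows "u = s \<or> (\<exists>w. adj E u w \<and> y u < y w) \<Longrightarrow>
    \<exists>p. p \<noteq> [] \<and> hd p = u \<and> last p = t \<and> successively (\<lambda>a b. adj E a b \<and> y b < y a) p"
proof (induction "card {w. y w < y u}" arbitrary: u rule: less_induct)
  case less
  show ?case
  proof (cases "u = t")
    case True
    then show ?thesis
      by (intro exI[of _ "[t]"]) auto
  next
    case False
    then have "0 \<le> net_outflow E y u" and "0 < net_outflow E y u \<or> (\<exists>w. adj E u w \<and> y u < y w)"
      using pot less.prems by (auto simp: unit_potential_def)
    then obtain w where w: "adj E u w" "y w < y u"
      using lower_neighbour_exists[OF sg] by blast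
    have "{v. y v < y w} \<subset> {v. y v < y u}"
      using w by auto
    then have "card {v. y v < y w} < card {v. y v < y u}"
      by (simp add: psubset_card_mono)
    moreover have "\<exists>w'. adj E w w' \<and> y w < y w'"
      using w by (auto simp: adj_def)
    ultimately obtain p where "p \<noteq> []" "hd p = w" "last p = t"
        "successively (\<lambda>a b. adj E a b \<and> y b < y a) p"
      using less.hyps by blast
    then show ?thesis
      using w by (intro exI[of _ "u # p"]) (auto simp: successively_Cons)
  qed
qed

lemma unit_potential_edge_on_simple_path:
  fixes E :: "('v::finite \<times> 'v) set"
  assumes sg: "simple_oriented_graph E" and pot: "unit_potential E s t y"
    and uw: "adj E u w" "y w < y u"
  obtains P k where "simple_path E s t P" "Suc k < length P" "P ! k = u" "P ! Suc k = w"
proof -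
  let ?desc = "\<lambda>y. successively (\<lambda>a b. adj E a b \<and> y b < y a)"
  obtain p where p: "p \<noteq> []" "hd p = w" "last p = t" "?desc y p"
    using descending_walk_to_sink[OF sg pot, of w] uw by (auto simp: adj_def)
  obtain q where q: "q \<noteq> []" "hd q = u" "last q = s" "?desc (\<lambda>v. - y v) q"
    using descending_walk_to_sink[OF sg unit_potential_uminus[OF pot], of u] uw by auto
  define P where "P = rev q @ p"
  have "?desc y (rev q)"
    using q(4) by (simp add: successively_rev adj_def disj_commute)
  then have desc: "?desc y P"
    using p q uw by (simp add: P_def successively_append_iff last_rev hd_rev)
  then have "sorted_wrt (\<lambda>a b. y b < y a) P"
    by (subst successively_conv_sorted_wrt[symmetric]) (auto simp: transp_def elim: successively_mono)
  then have "distinct P"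
    by (induction P) auto
  then have "simple_path E s t P"
    using p q desc by (auto simp: simple_path_def P_def successively_conv_nth hd_rev last_rev)
  moreover have "Suc (length q - 1) < length P" "P ! (length q - 1) = u" "P ! Suc (length q - 1) = w"
    using p q by (auto simp: P_def nth_append rev_nth hd_conv_nth)
  ultimately show thesis
    by (rule that)
qed

lemma unit_potential_flow_on_path_edges:
  fixes E :: "('v::finite \<times> 'v) set"
  assumes sg: "simple_oriented_graph E" and pot: "unit_potential E s t y"
    and "e \<in> E" and "edge_flow E y e \<noteq> 0"
  shows "e \<in> path_edges E s t"
proof -
  obtain a b where e: "e = (a, b)"
    by fastforce
  then have "y a \<noteq> y b"
    using assms edge_flow_edge[OF sg] by auto
  then consider "y b < y a" | "y a < y b"
    by linarith
  then have "\<exists>P k. simple_path E s t P \<and> Suc k < length P \<and>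
      ((P ! k, P ! Suc k) = e \<or> (P ! Suc k, P ! k) = e)"
  proof cases
    case 1
    then show ?thesis
      using unit_potential_edge_on_simple_path[OF sg pot, of a b] assms(3) e
      by (metis adj_def)
  next
    case 2
    then show ?thesis
      using unit_potential_edge_on_simple_path[OF sg pot, of b a] assms(3) e
      by (metis adj_def)
  qed
  then show ?thesis
    using assms(3) by (auto simp: path_edges_def edge_on_path_def)
qed

lemma abs_le_linf:
  assumes "finite E" and "e \<in> E"
  shows "\<bar>\<Delta> e\<bar> \<le> linf E \<Delta>"
  using assms by (auto simp: linf_def)

lemma linf_nonneg:
  assumes "finite E"
  shows "0 \<le> linf E \<Delta>"
proof (cases "E = {}")
  case False
  then obtain e where "e \<in> E"
    by blast
  then show ?thesis
    using abs_le_linf[OF assms, of e \<Delta>] by linarith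
qed (simp add: linf_def)

lemma abs_sum_mult_le_linf_sqrt:
  assumes "finite E" and "finite S" and support: "\<And>e. e \<in> E \<Longrightarrow> f e \<noteq> 0 \<Longrightarrow> e \<in> S"
  shows "\<bar>\<Sum>e\<in>E. \<Delta> e * f e\<bar> \<le> linf E \<Delta> * sqrt ((\<Sum>e\<in>E. (f e)\<^sup>2) * real (card S))"
proof -
  define F where "F = {e \<in> E. f e \<noteq> 0}"
  have "F \<subseteq> E" "F \<subseteq> S"
    using support by (auto simp: F_def)
  have "(\<Sum>e\<in>E. \<Delta> e * f e) = (\<Sum>e\<in>F. \<Delta> e * f e)"
    using assms(1) by (intro sum.mono_neutral_right) (auto simp: F_def)
  then have "\<bar>\<Sum>e\<in>E. \<Delta> e * f e\<bar> \<le> (\<Sum>e\<in>F. \<bar>\<Delta> e\<bar> * \<bar>f e\<bar>)"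
    by (simp add: abs_mult order_trans[OF sum_abs])
  also have "\<dots> \<le> (\<Sum>e\<in>F. linf E \<Delta> * \<bar>f e\<bar>)"
    using \<open>F \<subseteq> E\<close> assms(1) by (intro sum_mono mult_right_mono abs_le_linf) auto
  also have "\<dots> = linf E \<Delta> * (\<Sum>e\<in>F. \<bar>1\<bar> * \<bar>f e\<bar>)"
    by (simp add: sum_distrib_left)
  also have "\<dots> \<le> linf E \<Delta> * (L2_set (\<lambda>_. 1) F * L2_set f F)"
    using assms(1) by (intro mult_left_mono L2_set_mult_ineq linf_nonneg)
  also have "\<dots> \<le> linf E \<Delta> * (sqrt (real (card S)) * sqrt (\<Sum>e\<in>E. (f e)\<^sup>2))"
  proof (intro mult_left_mono mult_mono linf_nonneg assms(1))
    show "L2_set (\<lambda>_. 1) F \<le> sqrt (real (card S))"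
      using card_mono[OF assms(2) \<open>F \<subseteq> S\<close>] by (simp add: L2_set_constant)
    show "L2_set f F \<le> sqrt (\<Sum>e\<in>E. (f e)\<^sup>2)"
      unfolding L2_set_def using assms(1) \<open>F \<subseteq> E\<close> by (intro real_sqrt_le_mono sum_mono2) auto
  qed auto
  finally show ?thesis
    by (simp add: real_sqrt_mult mult.commute)
qed

theorem lemma4:
  fixes E :: "('v::finite \<times> 'v) set" and \<Delta> :: "('v \<times> 'v) \<Rightarrow> real" and i j :: 'v
  assumes "simple_oriented_graph E" and "connected_graph E"
  shows "\<bar>\<Sum>e\<in>E. \<Delta> e * (\<Sum>v\<in>UNIV. incidence E v e *
            (pinv (laplacian E) *v (axis i 1 - axis j 1)) $ v)\<bar>
         \<le> linf E \<Delta> * sqrt (eff_res E i j * real (card (path_edges E i j)))"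
proof -
  define d :: "real^'v" where "d = axis i 1 - axis j 1"
  define x where "x = pinv (laplacian E) *v d"
  have Lx: "laplacian E *v x = d"
    unfolding x_def
  proof (rule symmetric_pinv_solves[OF laplacian_symmetric])
    fix z assume "laplacian E *v z = 0"
    then have "z $ i = z $ j"
      by (rule laplacian_kernel_constant[OF assms])
    then show "z \<bullet> d = 0"
      by (simp add: d_def inner_diff_right inner_axis)
  qed
  then have "unit_potential E i j (($) x)"
    by (simp add: unit_potential_def d_def axis_def flip: laplacian_mult_vec_nth)
  then have support: "e \<in> path_edges E i j" if "e \<in> E" "edge_flow E (($) x) e \<noteq> 0" for e
    using unit_potential_flow_on_path_edges[OF assms(1)] that by blast
  have "eff_res E i j = x \<bullet> (laplacian E *v x)"
    by (simp add: eff_res_def Lx inner_commute flip: d_def x_def)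
  then have eff_res: "eff_res E i j = (\<Sum>e\<in>E. (edge_flow E (($) x) e)\<^sup>2)"
    by (simp add: laplacian_quadratic_form)
  show ?thesis
    unfolding eff_res x_def[symmetric] d_def[symmetric] edge_flow_def[symmetric]
    by (rule abs_sum_mult_le_linf_sqrt) (simp_all add: support)
qed

end
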